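(* For every graph $H$ (with at least one edge), there exists a constant $c(H) > 0$ such that $p_c(n,H) \geqslant c(H)\, n^{-1/\lambda^*(H)}$ for every $n \in \mathbb{N}$.
   Context: $\lambda^*(H) := \min_{e \in E(H)} \max_{F \subset H - e} \frac{e(F)}{v(F)}$, the maximum being over (nonempty) subgraphs $F$ of $H - e$. The $H$-bootstrap process on $K_n$ starting from $G \subset E(K_n)$: $G_0 = G$, $G_{t+1} = G_t \cup \{e \in E(K_n) : \exists\, H' \cong H,\ e \in H' \subset G_t \cup \{e\}\}$; $\langle G\rangle_H = \bigcup_t G_t$. $G_{n,p}$ is the Erdős–Rényi random graph. $p_c(n,H) = \inf\{p : \mathbb{P}(\langle G_{n,p}\rangle_H = K_n) \geqslant 1/2\}$. *)

theory Defs
  imports Complex_Main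
begin

definition is_graph :: "'a set \<Rightarrow> 'a set set \<Rightarrow> bool" where
  "is_graph V E \<longleftrightarrow> finite V \<and> (\<forall>d\<in>E. d \<subseteq> V \<and> card d = 2)"

definition max_density :: "'a set \<Rightarrow> 'a set set \<Rightarrow> real" where
  "max_density V E =
     Max {real (card D) / real (card W) | W D. W \<subseteq> V \<and> W \<noteq> {} \<and> D \<subseteq> E \<and> (\<forall>d\<in>D. d \<subseteq> W)}"

definition lambda_star :: "'a set \<Rightarrow> 'a set set \<Rightarrow> real" where
  "lambda_star V E = Min ((\<lambda>e. max_density V (E - {e})) ` E)"

definition Kn_edges :: "nat \<Rightarrow> nat set set" where
  "Kn_edges n = {{u, v} | u v. u < n \<and> v < n \<and> u \<noteq> v}"

text \<open>One step of the H-bootstrap process on K_n: add every edge e of K_n lying in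
  a copy H' of H (image of H under an injective vertex map into [n]) with
  E(H') contained in G plus e.\<close>

definition bstep :: "nat \<Rightarrow> 'a set \<Rightarrow> 'a set set \<Rightarrow> nat set set \<Rightarrow> nat set set" where
  "bstep n V E G = G \<union> {e \<in> Kn_edges n. \<exists>f. inj_on f V \<and> f ` V \<subseteq> {0..<n} \<and>
        e \<in> (\<lambda>d. f ` d) ` E \<and> (\<lambda>d. f ` d) ` E \<subseteq> G \<union> {e}}"

definition bclosure :: "nat \<Rightarrow> 'a set \<Rightarrow> 'a set set \<Rightarrow> nat set set \<Rightarrow> nat set set" where
  "bclosure n V E G = (\<Union>t. (bstep n V E ^^ t) G)"

text \<open>Probability that G(n,p) satisfies the property P (each edge of K_n present
  independently with probability p).\<close>

definition gnp_prob :: "nat \<Rightarrow> real \<Rightarrow> (nat set set \<Rightarrow> bool) \<Rightarrow> real" where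
  "gnp_prob n p P = (\<Sum>G\<in>Pow (Kn_edges n).
      if P G then p ^ card G * (1 - p) ^ (card (Kn_edges n) - card G) else 0)"

definition p_c :: "nat \<Rightarrow> 'a set \<Rightarrow> 'a set set \<Rightarrow> real" where
  "p_c n V E = Inf {p. 0 \<le> p \<and> p \<le> 1 \<and>
       gnp_prob n p (\<lambda>G. bclosure n V E G = Kn_edges n) \<ge> 1/2}"

end

theory Submission
  imports Defs "HOL-Library.FuncSet"
begin

text \<open>If the H-bootstrap process started from G \<noteq> K_n fills K_n, then the first edge it adds
  completes a copy of H, so G contains a copy of H - e for some edge e, hence a copy
  of a subgraph F of H - e with e(F) \<ge> \<lambda>*(H) v(F). By the first moment method this happens
  with probability at most n^v(F) p^e(F) \<le> (n p^\<lambda>*)^v(F), which is small once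
  p \<le> c n^(-1/\<lambda>*). A union bound over the edges of H, plus the event G = K_n,
  keeps the probability of percolation below 1/2.\<close>

lemma finite_Kn_edges: "finite (Kn_edges n)"
proof -
  have "Kn_edges n \<subseteq> Pow {0..<n}" unfolding Kn_edges_def by auto
  then show ?thesis by (rule finite_subset) simp
qed

lemma card_Kn_edges_pos: "2 \<le> n \<Longrightarrow> 0 < card (Kn_edges n)"
proof -
  assume "2 \<le> n"
  then have "{0, 1} \<in> Kn_edges n" unfolding Kn_edges_def by force
  then show ?thesis using finite_Kn_edges card_gt_0_iff by blast
qed

lemma sum_Pow_binomial_weights:
  fixes p :: real
  assumes "finite A"
  shows "(\<Sum>G\<in>Pow A. p ^ card G * (1 - p) ^ (card A - card G)) = 1"
  using assms
proof (induction A rule: finite_induct)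
  case empty then show ?case by simp
next
  case (insert a A)
  let ?t = "\<lambda>B G. p ^ card G * (1 - p) ^ (card B - card G)"
  have fin: "finite (Pow A)" using insert by simp
  have disj: "Pow A \<inter> insert a ` Pow A = {}" using insert by auto
  have inj: "inj_on (insert a) (Pow A)"
    using insert by (intro inj_onI) (metis PowD insert_ident subsetD)
  have without_a: "(\<Sum>G\<in>Pow A. ?t (insert a A) G) = (1 - p) * (\<Sum>G\<in>Pow A. ?t A G)"
    unfolding sum_distrib_left
  proof (rule sum.cong[OF refl])
    fix G assume "G \<in> Pow A"
    then have "card G \<le> card A" using insert card_mono by auto
    then have "card (insert a A) - card G = Suc (card A - card G)" using insert by simp
    then show "?t (insert a A) G = (1 - p) * ?t A G" by simp
  qed
  have with_a: "(\<Sum>G\<in>insert a ` Pow A. ?t (insert a A) G) = p * (\<Sum>G\<in>Pow A. ?t A G)"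
    unfolding sum.reindex[OF inj] sum_distrib_left o_def
  proof (rule sum.cong[OF refl])
    fix G assume "G \<in> Pow A"
    then have "finite G" "a \<notin> G" using insert finite_subset by auto
    then have "card (insert a G) = Suc (card G)" by simp
    then show "?t (insert a A) (insert a G) = p * ?t A G" using insert by simp
  qed
  have "(\<Sum>G\<in>Pow (insert a A). ?t (insert a A) G)
      = (\<Sum>G\<in>Pow A. ?t (insert a A) G) + (\<Sum>G\<in>insert a ` Pow A. ?t (insert a A) G)"
    unfolding Pow_insert using sum.union_disjoint[OF fin finite_imageI[OF fin] disj] .
  also have "\<dots> = 1" using without_a with_a insert.IH by (simp add: algebra_simps)
  finally show ?case .
qed

lemma gnp_prob_one: "gnp_prob n 1 P = (if P (Kn_edges n) then 1 else 0)"
proof -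
  have "gnp_prob n 1 P = (\<Sum>G\<in>Pow (Kn_edges n). if G = Kn_edges n then if P G then 1 else 0 else 0)"
    unfolding gnp_prob_def
  proof (rule sum.cong[OF refl])
    fix G assume "G \<in> Pow (Kn_edges n)"
    then have "G \<noteq> Kn_edges n \<Longrightarrow> card G < card (Kn_edges n)"
      using finite_Kn_edges by (meson PowD psubsetI psubset_card_mono)
    then show "(if P G then 1 ^ card G * (1 - 1) ^ (card (Kn_edges n) - card G) else 0)
        = (if G = Kn_edges n then if P G then 1 else 0 else (0::real))" by auto
  qed
  then show ?thesis using finite_Kn_edges by simp
qed

lemma gnp_prob_mono:
  assumes "\<And>G. G \<subseteq> Kn_edges n \<Longrightarrow> P G \<Longrightarrow> Q G" "0 \<le> p" "p \<le> 1"
  shows "gnp_prob n p P \<le> gnp_prob n p Q"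
  unfolding gnp_prob_def by (rule sum_mono) (use assms in auto)

lemma gnp_prob_disj_le:
  assumes "0 \<le> p" "p \<le> 1"
  shows "gnp_prob n p (\<lambda>G. P G \<or> Q G) \<le> gnp_prob n p P + gnp_prob n p Q"
  unfolding gnp_prob_def sum.distrib[symmetric] by (rule sum_mono) (use assms in auto)

lemma gnp_prob_bex_le:
  assumes "finite I" "0 \<le> p" "p \<le> 1"
  shows "gnp_prob n p (\<lambda>G. \<exists>i\<in>I. Q i G) \<le> (\<Sum>i\<in>I. gnp_prob n p (Q i))"
  using assms(1)
proof (induction I rule: finite_induct)
  case empty then show ?case by (simp add: gnp_prob_def)
next
  case (insert x I)
  have "gnp_prob n p (\<lambda>G. \<exists>i\<in>insert x I. Q i G)
      \<le> gnp_prob n p (Q x) + gnp_prob n p (\<lambda>G. \<exists>i\<in>I. Q i G)"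
    using gnp_prob_disj_le[OF assms(2,3)] by simp
  then show ?case using insert by simp
qed

lemma gnp_prob_superset_le:
  assumes "0 \<le> p" "p \<le> 1"
  shows "gnp_prob n p (\<lambda>G. S \<subseteq> G) \<le> p ^ card S"
proof (cases "S \<subseteq> Kn_edges n")
  case False
  have "gnp_prob n p (\<lambda>G. S \<subseteq> G) = 0" unfolding gnp_prob_def
    by (rule sum.neutral) (use False in auto)
  then show ?thesis using assms by simp
next
  case True
  let ?K = "Kn_edges n"
  let ?t = "\<lambda>G. p ^ card G * (1 - p) ^ (card ?K - card G)"
  have fS: "finite S" using True finite_Kn_edges finite_subset by blast
  have inj: "inj_on (\<lambda>H. S \<union> H) (Pow (?K - S))" by (rule inj_onI) auto
  have "gnp_prob n p (\<lambda>G. S \<subseteq> G) = (\<Sum>G\<in>{G\<in>Pow ?K. S \<subseteq> G}. ?t G)"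
    unfolding gnp_prob_def by (rule sum.inter_filter[symmetric]) (simp add: finite_Kn_edges)
  also have "{G\<in>Pow ?K. S \<subseteq> G} = (\<lambda>H. S \<union> H) ` Pow (?K - S)"
    using True by (auto intro!: image_eqI[of _ _ "G - S" for G])
  also have "(\<Sum>G\<in>(\<lambda>H. S \<union> H) ` Pow (?K - S). ?t G) = (\<Sum>H\<in>Pow (?K - S). ?t (S \<union> H))"
    by (rule sum.reindex[OF inj, unfolded o_def])
  also have "\<dots> = (\<Sum>H\<in>Pow (?K - S).
      p ^ card S * (p ^ card H * (1 - p) ^ (card (?K - S) - card H)))"
  proof (rule sum.cong[OF refl])
    fix H assume H: "H \<in> Pow (?K - S)"
    have fH: "finite H" using H finite_Kn_edges finite_subset by blast
    have "card (S \<union> H) = card S + card H" using H fH fS by (subst card_Un_disjoint) auto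
    moreover have "card (?K - S) = card ?K - card S"
      using True fS by (simp add: card_Diff_subset)
    ultimately show "?t (S \<union> H) = p ^ card S * (p ^ card H * (1 - p) ^ (card (?K - S) - card H))"
      by (simp add: power_add)
  qed
  also have "\<dots> = p ^ card S"
    using sum_Pow_binomial_weights[of "?K - S" p] finite_Kn_edges
    by (simp add: sum_distrib_left[symmetric])
  finally show ?thesis by simp
qed

lemma bclosure_fixpoint:
  assumes "bstep n V E G = G"
  shows "bclosure n V E G = G"
proof -
  have "(bstep n V E ^^ t) G = G" for t by (induction t) (simp_all add: assms)
  then show ?thesis unfolding bclosure_def by simp
qed

lemma p_c_ge:
  assumes "q \<le> 1"
    and "\<And>p. 0 \<le> p \<Longrightarrow> p < q \<Longrightarrow> gnp_prob n p (\<lambda>G. bclosure n V E G = Kn_edges n) < 1/2"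
  shows "q \<le> p_c n V E"
proof -
  let ?S = "{p. 0 \<le> p \<and> p \<le> 1 \<and> gnp_prob n p (\<lambda>G. bclosure n V E G = Kn_edges n) \<ge> 1/2}"
  have "bclosure n V E (Kn_edges n) = Kn_edges n"
    by (rule bclosure_fixpoint) (auto simp: bstep_def)
  then have "1 \<in> ?S" by (simp add: gnp_prob_one)
  then show ?thesis unfolding p_c_def
    by (intro cInf_greatest) (use assms(2) in \<open>force+\<close>)
qed

lemma is_graph_finite_edges: "is_graph V E \<Longrightarrow> finite E"
  unfolding is_graph_def by (meson Pow_iff finite_Pow_iff finite_subset subsetI)

lemma is_graph_vertices_nonempty: "is_graph V E \<Longrightarrow> E \<noteq> {} \<Longrightarrow> V \<noteq> {}"
  unfolding is_graph_def by fastforce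

lemma finite_densities:
  assumes "is_graph V E"
  shows "finite {real (card D) / real (card W) | W D.
    W \<subseteq> V \<and> W \<noteq> {} \<and> D \<subseteq> E \<and> (\<forall>d\<in>D. d \<subseteq> W)}"
proof (rule finite_subset)
  show "finite ((\<lambda>(W, D). real (card D) / real (card W)) ` (Pow V \<times> Pow E))"
    using assms is_graph_finite_edges[OF assms] by (simp add: is_graph_def)
qed auto

lemma max_density_attained:
  assumes "is_graph V E" "V \<noteq> {}"
  obtains W D where "W \<subseteq> V" "W \<noteq> {}" "D \<subseteq> E" "\<forall>d\<in>D. d \<subseteq> W"
    "max_density V E = real (card D) / real (card W)"
proof -
  have "max_density V E \<in> {real (card D) / real (card W) | W D.
      W \<subseteq> V \<and> W \<noteq> {} \<and> D \<subseteq> E \<and> (\<forall>d\<in>D. d \<subseteq> W)}"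
    unfolding max_density_def by (rule Max_in[OF finite_densities[OF assms(1)]]) (use assms(2) in blast)
  then show ?thesis using that by blast
qed

lemma max_density_ge:
  assumes "is_graph V E" "W \<subseteq> V" "W \<noteq> {}" "D \<subseteq> E" "\<forall>d\<in>D. d \<subseteq> W"
  shows "real (card D) / real (card W) \<le> max_density V E"
  unfolding max_density_def by (rule Max_ge[OF finite_densities[OF assms(1)]]) (use assms in blast)

lemma is_graph_Diff: "is_graph V E \<Longrightarrow> is_graph V (E - F)"
  unfolding is_graph_def by auto

lemma lambda_star_nonneg:
  assumes "is_graph V E" "E \<noteq> {}"
  shows "0 \<le> lambda_star V E"
proof -
  have "0 \<le> max_density V (E - {e})" for e
    using max_density_ge[OF is_graph_Diff[OF assms(1)], of V "{}"]
      is_graph_vertices_nonempty[OF assms] by simp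
  then show ?thesis unfolding lambda_star_def
    using is_graph_finite_edges[OF assms(1)] assms(2) by (subst Min_ge_iff) auto
qed

lemma dense_subgraph_without_edge:
  assumes "is_graph V E" "e \<in> E"
  obtains W D where "W \<subseteq> V" "W \<noteq> {}" "D \<subseteq> E - {e}" "\<forall>d\<in>D. d \<subseteq> W"
    "lambda_star V E * real (card W) \<le> real (card D)"
proof -
  have "V \<noteq> {}" using is_graph_vertices_nonempty assms by blast
  then obtain W D where W: "W \<subseteq> V" "W \<noteq> {}" "D \<subseteq> E - {e}" "\<forall>d\<in>D. d \<subseteq> W"
    and max: "max_density V (E - {e}) = real (card D) / real (card W)"
    using max_density_attained[OF is_graph_Diff[OF assms(1)]] by metis
  have "card W > 0"
    using W(1,2) assms(1) by (meson card_gt_0_iff finite_subset is_graph_def)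
  have "lambda_star V E \<le> max_density V (E - {e})"
    unfolding lambda_star_def using is_graph_finite_edges[OF assms(1)] assms(2) by simp
  then have "lambda_star V E * real (card W) \<le> real (card D)"
    using max \<open>card W > 0\<close> by (simp add: le_divide_eq)
  then show ?thesis using that W by blast
qed

definition contains_copy :: "nat \<Rightarrow> 'a set \<Rightarrow> 'a set set \<Rightarrow> nat set set \<Rightarrow> bool" where
  "contains_copy n W D G \<longleftrightarrow> (\<exists>f. inj_on f W \<and> f ` W \<subseteq> {0..<n} \<and> (\<lambda>d. f ` d) ` D \<subseteq> G)"

lemma contains_copy_subgraph:
  "contains_copy n V E G \<Longrightarrow> W \<subseteq> V \<Longrightarrow> D \<subseteq> E \<Longrightarrow> contains_copy n W D G"
  unfolding contains_copy_def by (meson image_mono inj_on_subset order_trans)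

lemma bclosure_eq_Kn_edges_imp_copy:
  assumes "is_graph V E" "bclosure n V E G = Kn_edges n" "G \<noteq> Kn_edges n"
  shows "\<exists>e\<in>E. contains_copy n V (E - {e}) G"
proof -
  have "bstep n V E G \<noteq> G" using bclosure_fixpoint assms(2,3) by metis
  then obtain x f where f: "inj_on f V" "f ` V \<subseteq> {0..<n}" "x \<in> (\<lambda>d. f ` d) ` E"
    and "(\<lambda>d. f ` d) ` E \<subseteq> G \<union> {x}" "x \<notin> G"
    unfolding bstep_def by auto
  then obtain e where e: "e \<in> E" "x = f ` e" by blast
  have "f ` d \<in> G" if "d \<in> E - {e}" for d
  proof -
    have "d \<subseteq> V" "e \<subseteq> V" using assms(1) that e(1) unfolding is_graph_def by auto
    then have "f ` d \<noteq> x" using that e f(1) by (metis DiffE inj_on_image_eq_iff singletonI)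
    then show ?thesis using \<open>(\<lambda>d. f ` d) ` E \<subseteq> G \<union> {x}\<close> that by blast
  qed
  then have "contains_copy n V (E - {e}) G" unfolding contains_copy_def using f(1,2) by blast
  then show ?thesis using e(1) by blast
qed

lemma gnp_prob_contains_copy_le:
  assumes "finite W" "\<forall>d\<in>D. d \<subseteq> W" "0 \<le> p" "p \<le> 1"
  shows "gnp_prob n p (contains_copy n W D) \<le> real n ^ card W * p ^ card D"
proof -
  define maps where "maps = {f \<in> W \<rightarrow>\<^sub>E {0..<n}. inj_on f W}"
  have finite_maps: "finite maps" unfolding maps_def using assms(1) by (simp add: finite_PiE)
  have card_maps: "card maps \<le> n ^ card W"
    using card_mono[OF finite_PiE[OF assms(1)], of "\<lambda>_. {0..<n}" maps] assms(1)
    unfolding maps_def by (simp add: card_PiE)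
  have "contains_copy n W D G \<Longrightarrow> \<exists>f\<in>maps. (\<lambda>d. f ` d) ` D \<subseteq> G" for G
  proof -
    assume "contains_copy n W D G"
    then obtain f where f: "inj_on f W" "f ` W \<subseteq> {0..<n}" "(\<lambda>d. f ` d) ` D \<subseteq> G"
      unfolding contains_copy_def by blast
    have "(\<lambda>d. restrict f W ` d) ` D = (\<lambda>d. f ` d) ` D"
      using assms(2) by (intro image_cong refl) (auto simp: subset_iff)
    moreover have "restrict f W \<in> maps"
      unfolding maps_def using f(1,2) by (auto simp: inj_on_def)
    ultimately show ?thesis using f(3) by metis
  qed
  then have "gnp_prob n p (contains_copy n W D)
      \<le> gnp_prob n p (\<lambda>G. \<exists>f\<in>maps. (\<lambda>d. f ` d) ` D \<subseteq> G)"
    using assms(3,4) by (intro gnp_prob_mono) auto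
  also have "\<dots> \<le> (\<Sum>f\<in>maps. gnp_prob n p (\<lambda>G. (\<lambda>d. f ` d) ` D \<subseteq> G))"
    by (rule gnp_prob_bex_le[OF finite_maps assms(3,4)])
  also have "\<dots> \<le> (\<Sum>f\<in>maps. p ^ card D)"
  proof (rule sum_mono)
    fix f assume "f \<in> maps"
    then have "inj_on (\<lambda>d. f ` d) D"
      using assms(2) unfolding maps_def by (auto intro!: inj_onI simp: inj_on_image_eq_iff)
    then show "gnp_prob n p (\<lambda>G. (\<lambda>d. f ` d) ` D \<subseteq> G) \<le> p ^ card D"
      using gnp_prob_superset_le[OF assms(3,4)] by (metis card_image)
  qed
  also have "\<dots> \<le> real n ^ card W * p ^ card D"
    using card_maps assms(3) by (simp add: mult_right_mono flip: of_nat_power)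
  finally show ?thesis .
qed

lemma power_mult_power_le_of_density:
  fixes n w d :: nat and l c p :: real
  assumes "1 \<le> n" "1 \<le> w" "0 < l" "l * real w \<le> real d"
    and "0 \<le> p" "p \<le> c * real n powr (- 1 / l)" "0 < c" "c \<le> 1"
  shows "real n ^ w * p ^ d \<le> c powr l"
proof (cases "p = 0")
  case True
  have "0 < l * real w" using assms(2,3) by simp
  then have "0 < real d" using assms(4) by linarith
  then show ?thesis using True by (simp add: power_0_left)
next
  case False
  then have "0 < p" using assms(5) by simp
  have "real n powr (- 1 / l) \<le> real n powr 0" by (rule powr_mono) (use assms(1,3) in auto)
  then have "real n powr (- 1 / l) \<le> 1" using assms(1) by simp
  then have "p \<le> 1" using assms(6-8) mult_le_one[of c "real n powr (- 1 / l)"] by simp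
  have "p ^ d = p powr real d" using \<open>0 < p\<close> by (simp add: powr_realpow)
  also have "\<dots> \<le> p powr (l * real w)" using assms(4) \<open>0 < p\<close> \<open>p \<le> 1\<close> by (simp add: powr_mono')
  also have "\<dots> = (p powr l) powr real w" by (simp only: powr_powr)
  also have "\<dots> = (p powr l) ^ w" using \<open>0 < p\<close> by (simp add: powr_realpow)
  finally have p_power: "p ^ d \<le> (p powr l) ^ w" .
  have "real n * p powr l \<le> real n * (c * real n powr (- 1 / l)) powr l"
    using assms(3,5,6) by (intro mult_left_mono powr_mono2) auto
  also have "\<dots> = real n * (c powr l * real n powr (- 1 / l * l))"
    using assms(7) by (simp add: powr_mult powr_powr)
  also have "\<dots> = c powr l"
    using assms(1,3) by (simp add: powr_minus)
  finally have n_p_power: "real n * p powr l \<le> c powr l" .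
  have "real n ^ w * p ^ d \<le> (real n * p powr l) ^ w"
    using p_power by (simp add: power_mult_distrib mult_left_mono)
  also have "\<dots> \<le> (c powr l) ^ w" using n_p_power by (intro power_mono) auto
  also have "\<dots> \<le> c powr l"
    using power_decreasing[OF assms(2), of "c powr l"] powr_le1[of l c] assms(3,7,8) by simp
  finally show ?thesis .
qed

lemma gnp_prob_contains_copy_without_edge_le:
  assumes "is_graph V E" "e \<in> E" "0 < lambda_star V E" "1 \<le> n"
    and "0 \<le> p" "p \<le> 1" "p \<le> c * real n powr (- 1 / lambda_star V E)" "0 < c" "c \<le> 1"
  shows "gnp_prob n p (contains_copy n V (E - {e})) \<le> c powr lambda_star V E"
proof -
  obtain W D where W: "W \<subseteq> V" "W \<noteq> {}" "D \<subseteq> E - {e}" "\<forall>d\<in>D. d \<subseteq> W"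
    and dense: "lambda_star V E * real (card W) \<le> real (card D)"
    using dense_subgraph_without_edge[OF assms(1,2)] by blast
  have "finite W" using W(1) assms(1) finite_subset unfolding is_graph_def by blast
  then have "1 \<le> card W" using W(2) by (simp add: Suc_le_eq card_gt_0_iff)
  have "gnp_prob n p (contains_copy n V (E - {e})) \<le> gnp_prob n p (contains_copy n W D)"
    using contains_copy_subgraph W(1,3) assms(5,6) by (intro gnp_prob_mono) auto
  also have "\<dots> \<le> real n ^ card W * p ^ card D"
    using gnp_prob_contains_copy_le \<open>finite W\<close> W(4) assms(5,6) by blast
  also have "\<dots> \<le> c powr lambda_star V E"
    using power_mult_power_le_of_density[OF assms(4) \<open>1 \<le> card W\<close> assms(3) dense assms(5,7-9)] .
  finally show ?thesis .
qed

lemma gnp_prob_bclosure_complete_le: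
  assumes "is_graph V E" "0 < lambda_star V E" "1 \<le> n"
    and "0 \<le> p" "p \<le> 1" "p \<le> c * real n powr (- 1 / lambda_star V E)" "0 < c" "c \<le> 1"
  shows "gnp_prob n p (\<lambda>G. bclosure n V E G = Kn_edges n)
    \<le> real (card E) * c powr lambda_star V E + p ^ card (Kn_edges n)"
proof -
  have "gnp_prob n p (\<lambda>G. bclosure n V E G = Kn_edges n)
      \<le> gnp_prob n p (\<lambda>G. (\<exists>e\<in>E. contains_copy n V (E - {e}) G) \<or> Kn_edges n \<subseteq> G)"
    using bclosure_eq_Kn_edges_imp_copy[OF assms(1)] assms(4,5)
    by (intro gnp_prob_mono) (metis order_refl, simp_all)
  also have "\<dots> \<le> (\<Sum>e\<in>E. gnp_prob n p (contains_copy n V (E - {e}))) + p ^ card (Kn_edges n)"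
    using gnp_prob_disj_le[OF assms(4,5)] gnp_prob_superset_le[OF assms(4,5)]
      gnp_prob_bex_le[OF is_graph_finite_edges[OF assms(1)] assms(4,5)]
    by (meson add_mono order_trans)
  also have "\<dots> \<le> (\<Sum>e\<in>E. c powr lambda_star V E) + p ^ card (Kn_edges n)"
    using gnp_prob_contains_copy_without_edge_le[OF assms(1) _ assms(2-8)]
    by (intro add_right_mono sum_mono) blast
  finally show ?thesis by simp
qed

theorem proposition5p2:
  fixes V :: "'a set" and E :: "'a set set"
  assumes "is_graph V E" and "E \<noteq> {}"
  shows "\<exists>c>0. \<forall>n::nat. n \<ge> 2 \<longrightarrow>
           p_c n V E \<ge> c * (if lambda_star V E = 0 then 0
                              else real n powr (- 1 / lambda_star V E))"
proof (cases "lambda_star V E = 0")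
  case True
  then show ?thesis using p_c_ge[of 0 _ V E] by (intro exI[of _ 1]) simp
next
  case False
  let ?l = "lambda_star V E"
  have "0 < ?l" using False lambda_star_nonneg[OF assms] by simp
  have "0 < card E" using assms is_graph_finite_edges card_gt_0_iff by blast
  define c where "c = min (1/4) ((1 / (4 * card E)) powr (1 / ?l))"
  have c: "0 < c" "c \<le> 1/4" using \<open>0 < card E\<close> by (auto simp: c_def)
  have "c powr ?l \<le> ((1 / (4 * card E)) powr (1 / ?l)) powr ?l"
    using c \<open>0 < ?l\<close> by (intro powr_mono2) (auto simp: c_def)
  then have "real (card E) * c powr ?l \<le> 1/4"
    using \<open>0 < ?l\<close> \<open>0 < card E\<close> by (simp add: powr_powr field_simps)
  have "c * real n powr (- 1 / ?l) \<le> p_c n V E" if "2 \<le> n" for n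
  proof (rule p_c_ge)
    have "real n powr (- 1 / ?l) \<le> real n powr 0"
      by (rule powr_mono) (use \<open>0 < ?l\<close> that in auto)
    then have "c * real n powr (- 1 / ?l) \<le> c" using c that by (simp add: mult_left_le)
    then have q: "c * real n powr (- 1 / ?l) \<le> 1/4" using c by linarith
    then show "c * real n powr (- 1 / ?l) \<le> 1" by simp
    fix p assume p: "0 \<le> p" "p < c * real n powr (- 1 / ?l)"
    have "p ^ card (Kn_edges n) \<le> p"
      using power_decreasing[of 1 "card (Kn_edges n)" p] p q card_Kn_edges_pos[OF that] by simp
    then show "gnp_prob n p (\<lambda>G. bclosure n V E G = Kn_edges n) < 1/2"
      using gnp_prob_bclosure_complete_le[OF assms(1) \<open>0 < ?l\<close>, of n p c] p q c that
        \<open>real (card E) * c powr ?l \<le> 1/4\<close> by simp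
  qed
  then show ?thesis using c False by auto
qed

end
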